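(* Let $N$ and $N_1$ be compactly supported distribution functions taking finitely many values. Put ${\scriptstyle\Delta}N=N_1-N$ and $N_\theta=N+\theta\,{\scriptstyle\Delta}N$, and define $$\mathbf{u}_\theta=\int_0^\infty N_\theta(t)\,dt,\qquad {\scriptstyle\Delta}\mathbf{u}=\int_0^\infty{\scriptstyle\Delta}N(t)\,dt,\qquad \mathbf{u}_{\scriptstyle\Delta}=\int_0^\infty|{\scriptstyle\Delta}N(t)|\,dt .$$ Then for $\theta\in(0,1)$, $$-\frac{d^2\,\mathbf{u}^*(N_\theta)}{d\theta^2}\ge\frac{(\mathbf{u}_{\scriptstyle\Delta})^2}{\mathbf{u}_\theta}\ge\frac{|{\scriptstyle\Delta}\mathbf{u}|^2}{\mathbf{u}_\theta}.$$
   Context: A distribution function is a nonincreasing function $N:[0,\infty)\to[0,1]$; such functions arise as normalized distribution functions $t\mapsto|I|^{-1}|\{x\in I:u(x)>t\}|$. For a distribution function $N$, $$\mathbf{u}^*(N)=\int_0^\infty\psi_0(N(t))\,dt,\qquad \psi_0(s)=s\ln(e/s).$$ *)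

theory Defs
  imports "HOL-Analysis.Analysis"
begin

definition distribution_function :: "(real \<Rightarrow> real) \<Rightarrow> bool" where
  "distribution_function N \<longleftrightarrow>
     (\<forall>t\<ge>0. 0 \<le> N t \<and> N t \<le> 1) \<and>
     (\<forall>s t. 0 \<le> s \<longrightarrow> s \<le> t \<longrightarrow> N t \<le> N s)"

definition compactly_supported_df :: "(real \<Rightarrow> real) \<Rightarrow> bool" where
  "compactly_supported_df N \<longleftrightarrow> (\<exists>T\<ge>0. \<forall>t\<ge>T. N t = 0)"

definition finitely_valued_df :: "(real \<Rightarrow> real) \<Rightarrow> bool" where
  "finitely_valued_df N \<longleftrightarrow> finite (N ` {0..})"

definition psi0 :: "real \<Rightarrow> real" where
  "psi0 s = s * ln (exp 1 / s)"

definition ustar :: "(real \<Rightarrow> real) \<Rightarrow> real" where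
  "ustar N = integral {0..} (\<lambda>t. psi0 (N t))"

end

theory Submission
  imports Defs
begin

text \<open>
  The pair (N, N1) is constant on each of finitely many bounded intervals I_p covering the
  part of [0,\<infinity>) where it does not vanish, the index p = (a, b) being the value of the pair.
  Hence F(\<theta>) = u*(N_\<theta>) = \<Sum>_p psi0(a + \<theta>(b - a)) |I_p|, and since psi0''(s) = -1/s,
  -F''(\<theta>) = \<Sum>_p (b - a)^2 / (a + \<theta>(b - a)) |I_p|.
  Cauchy--Schwarz with the weights (a + \<theta>(b - a)) |I_p|, whose sum is u_\<theta>, bounds this
  from below by u_\<Delta>^2 / u_\<theta>; finally |\<Delta>u| \<le> u_\<Delta>.
\<close>

definition joint_level_set :: "(real \<Rightarrow> real) \<Rightarrow> (real \<Rightarrow> real) \<Rightarrow> real \<times> real \<Rightarrow> real set" where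
  "joint_level_set N N1 p = {t. 0 \<le> t \<and> (N t, N1 t) = p}"

text \<open>The pair (0, 0) is excluded: its level set is unbounded.\<close>
definition joint_values :: "(real \<Rightarrow> real) \<Rightarrow> (real \<Rightarrow> real) \<Rightarrow> (real \<times> real) set" where
  "joint_values N N1 = (\<lambda>t. (N t, N1 t)) ` {0..} - {(0, 0)}"

lemma is_interval_level_set_df:
  assumes "distribution_function N"
  shows "is_interval {t. 0 \<le> t \<and> N t = c}"
  unfolding is_interval_1
proof (intro ballI allI impI, elim conjE)
  fix a b x assume "a \<in> {t. 0 \<le> t \<and> N t = c}" "b \<in> {t. 0 \<le> t \<and> N t = c}" "a \<le> x" "x \<le> b"
  moreover have "N b \<le> N x" "N x \<le> N a"
    using assms calculation unfolding distribution_function_def by auto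
  ultimately show "x \<in> {t. 0 \<le> t \<and> N t = c}" by auto
qed

lemma joint_level_set_lmeasurable:
  assumes "distribution_function N" "compactly_supported_df N"
    and "distribution_function N1" "compactly_supported_df N1"
    and "p \<noteq> (0, 0)"
  shows "joint_level_set N N1 p \<in> lmeasurable"
proof -
  obtain T0 where T0: "\<forall>t\<ge>T0. N t = 0" using assms(2) unfolding compactly_supported_df_def by blast
  obtain T1 where T1: "\<forall>t\<ge>T1. N1 t = 0" using assms(4) unfolding compactly_supported_df_def by blast
  have "joint_level_set N N1 p = {t. 0 \<le> t \<and> N t = fst p} \<inter> {t. 0 \<le> t \<and> N1 t = snd p}"
    by (auto simp: joint_level_set_def)
  then have "is_interval (joint_level_set N N1 p)"
    by (simp add: is_interval_Int is_interval_level_set_df assms(1,3))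
  then have "joint_level_set N N1 p \<in> sets lebesgue"
    using real_interval_borel_measurable by simp
  moreover have "joint_level_set N N1 p \<subseteq> {0..max T0 T1}"
    using T0 T1 assms(5) by (force simp: joint_level_set_def)
  then have "bounded (joint_level_set N N1 p)"
    using bounded_closed_interval bounded_subset by blast
  ultimately show ?thesis using bounded_set_imp_lmeasurable by blast
qed

lemma finite_joint_values:
  assumes "finitely_valued_df N" "finitely_valued_df N1"
  shows "finite (joint_values N N1)"
proof -
  have "joint_values N N1 \<subseteq> N ` {0..} \<times> N1 ` {0..}" unfolding joint_values_def by auto
  then show ?thesis using assms unfolding finitely_valued_df_def by (meson finite_SigmaI finite_subset)
qed

lemma has_integral_joint_values_sum:
  assumes "distribution_function N" "compactly_supported_df N" "finitely_valued_df N"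
    and "distribution_function N1" "compactly_supported_df N1" "finitely_valued_df N1"
    and "g 0 0 = 0"
  shows "((\<lambda>t. g (N t) (N1 t)) has_integral
           (\<Sum>p\<in>joint_values N N1. g (fst p) (snd p) * measure lebesgue (joint_level_set N N1 p))) {0..}"
proof -
  let ?P = "joint_values N N1" and ?I = "joint_level_set N N1"
  have fin: "finite ?P" using finite_joint_values assms(3,6) .
  have "(indicator (?I p) has_integral measure lebesgue (?I p)) {0..}" if "p \<in> ?P" for p
  proof -
    have "(indicator (?I p) has_integral measure lebesgue (?I p)) UNIV"
      using joint_level_set_lmeasurable assms that lmeasurable_iff_has_integral
      unfolding joint_values_def by blast
    moreover have "(\<lambda>t. if t \<in> {0..} then indicator (?I p) t else 0) = indicator (?I p)"
      by (auto simp: joint_level_set_def indicator_def)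
    ultimately show ?thesis using has_integral_restrict_UNIV by metis
  qed
  then have "((\<lambda>t. \<Sum>p\<in>?P. g (fst p) (snd p) * indicator (?I p) t) has_integral
           (\<Sum>p\<in>?P. g (fst p) (snd p) * measure lebesgue (?I p))) {0..}"
    using fin by (intro has_integral_sum has_integral_mult_right) auto
  moreover have "(\<Sum>p\<in>?P. g (fst p) (snd p) * indicator (?I p) t) = g (N t) (N1 t)"
    if "t \<in> {0..}" for t
  proof -
    have "(\<Sum>p\<in>?P. g (fst p) (snd p) * indicator (?I p) t)
        = (\<Sum>p\<in>?P. if p = (N t, N1 t) then g (N t) (N1 t) else 0)"
      using that by (intro sum.cong) (auto simp: joint_level_set_def indicator_def)
    also have "\<dots> = g (N t) (N1 t)"
      using fin that assms(7) by (auto simp: sum.delta' joint_values_def)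
    finally show ?thesis .
  qed
  ultimately show ?thesis by (rule has_integral_eq[rotated])
qed

corollary integral_joint_values_sum:
  assumes "distribution_function N" "compactly_supported_df N" "finitely_valued_df N"
    and "distribution_function N1" "compactly_supported_df N1" "finitely_valued_df N1"
    and "g 0 0 = 0"
  shows "integral {0..} (\<lambda>t. g (N t) (N1 t))
           = (\<Sum>p\<in>joint_values N N1. g (fst p) (snd p) * measure lebesgue (joint_level_set N N1 p))"
  using assms by (intro integral_unique has_integral_joint_values_sum)

lemma joint_values_combination_pos:
  assumes "distribution_function N" "distribution_function N1"
    and "p \<in> joint_values N N1" "0 < x" "x < 1"
  shows "fst p + x * (snd p - fst p) > 0"
proof -
  obtain t where t: "t \<ge> 0" "p = (N t, N1 t)" "p \<noteq> (0, 0)"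
    using assms(3) unfolding joint_values_def by auto
  have "0 \<le> N t" "0 \<le> N1 t"
    using assms(1,2) t(1) unfolding distribution_function_def by auto
  moreover have "fst p + x * (snd p - fst p) = (1 - x) * N t + x * N1 t"
    using t(2) by (simp add: algebra_simps)
  ultimately show ?thesis using t(2,3) assms(4,5)
    by (smt (verit, best) mult_nonneg_nonneg mult_pos_pos prod.inject)
qed

lemma psi0_has_real_derivative:
  assumes "s > 0"
  shows "(psi0 has_real_derivative ln (exp 1 / s) - 1) (at s)"
  unfolding psi0_def using assms
  by (auto intro!: derivative_eq_intros simp: field_simps power2_eq_square)

lemma psi0_affine_sum_has_real_derivative:
  assumes "finite P" "\<And>p. p \<in> P \<Longrightarrow> a p + x * d p > 0"
  shows "((\<lambda>\<tau>. \<Sum>p\<in>P. psi0 (a p + \<tau> * d p) * m p) has_real_derivative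
           (\<Sum>p\<in>P. (ln (exp 1 / (a p + x * d p)) - 1) * d p * m p)) (at x)"
  using assms
  by (auto intro!: DERIV_sum DERIV_cmult_right DERIV_chain2[OF psi0_has_real_derivative]
      derivative_eq_intros)

lemma psi0_affine_sum_second_derivative:
  assumes "finite P" "open S" "\<theta> \<in> S" "\<And>x p. x \<in> S \<Longrightarrow> p \<in> P \<Longrightarrow> a p + x * d p > 0"
  shows "(deriv (\<lambda>\<tau>. \<Sum>p\<in>P. psi0 (a p + \<tau> * d p) * m p) has_real_derivative
           - (\<Sum>p\<in>P. (d p)\<^sup>2 / (a p + \<theta> * d p) * m p)) (at \<theta>)"
proof -
  let ?G = "\<lambda>x. \<Sum>p\<in>P. (ln (exp 1 / (a p + x * d p)) - 1) * d p * m p"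
  have "(?G has_real_derivative (\<Sum>p\<in>P. - (d p)\<^sup>2 / (a p + \<theta> * d p) * m p)) (at \<theta>)"
  proof (intro DERIV_sum DERIV_cmult_right)
    fix p assume "p \<in> P"
    then have "a p + \<theta> * d p > 0" using assms(3,4) by blast
    then show "((\<lambda>x. (ln (exp 1 / (a p + x * d p)) - 1) * d p) has_real_derivative
                 - (d p)\<^sup>2 / (a p + \<theta> * d p)) (at \<theta>)"
      by (auto intro!: derivative_eq_intros) (simp_all add: algebra_simps power2_eq_square)
  qed
  moreover have "deriv (\<lambda>\<tau>. \<Sum>p\<in>P. psi0 (a p + \<tau> * d p) * m p) x = ?G x" if "x \<in> S" for x
    using psi0_affine_sum_has_real_derivative assms(1,4) that by (intro DERIV_imp_deriv) blast
  ultimately show ?thesis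
    using assms(2,3) by (auto simp: sum_negf intro: has_field_derivative_transform_within_open)
qed

lemma weighted_cauchy_schwarz:
  fixes n m d :: "'a \<Rightarrow> real"
  assumes "finite P" "\<And>p. p \<in> P \<Longrightarrow> n p > 0" "\<And>p. p \<in> P \<Longrightarrow> m p \<ge> 0"
  shows "(\<Sum>p\<in>P. \<bar>d p\<bar> * m p)\<^sup>2 / (\<Sum>p\<in>P. n p * m p) \<le> (\<Sum>p\<in>P. (d p)\<^sup>2 / n p * m p)"
proof -
  define A where "A = (\<Sum>p\<in>P. (d p)\<^sup>2 / n p * m p)"
  define B where "B = (\<Sum>p\<in>P. \<bar>d p\<bar> * m p)"
  define C where "C = (\<Sum>p\<in>P. n p * m p)"
  have "A \<ge> 0" "C \<ge> 0"
    unfolding A_def C_def using assms by (auto intro!: sum_nonneg simp: less_imp_le)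
  show ?thesis
  proof (cases "C = 0")
    case True
    then show ?thesis using \<open>A \<ge> 0\<close> by (simp add: A_def C_def)
  next
    case False
    with \<open>C \<ge> 0\<close> have "C > 0" by simp
    define c where "c = B / C"
    have "0 \<le> (\<Sum>p\<in>P. (\<bar>d p\<bar> - c * n p)\<^sup>2 / n p * m p)"
      using assms by (intro sum_nonneg) (simp add: less_imp_le)
    also have "\<dots> = (\<Sum>p\<in>P. (d p)\<^sup>2 / n p * m p - 2 * c * (\<bar>d p\<bar> * m p) + c\<^sup>2 * (n p * m p))"
      using assms(2) by (intro sum.cong) (force simp: field_simps power2_eq_square)+
    also have "\<dots> = A - 2 * c * B + c\<^sup>2 * C"
      unfolding A_def B_def C_def by (simp add: sum.distrib sum_subtractf sum_distrib_left)
    also have "\<dots> = A - B\<^sup>2 / C"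
      using \<open>C > 0\<close> unfolding c_def by (simp add: field_simps power2_eq_square)
    finally show ?thesis unfolding A_def B_def C_def by simp
  qed
qed

lemma power2_abs_sum_div_le:
  fixes d m :: "'a \<Rightarrow> real"
  assumes "\<And>p. p \<in> P \<Longrightarrow> m p \<ge> 0" "c \<ge> 0"
  shows "\<bar>\<Sum>p\<in>P. d p * m p\<bar>\<^sup>2 / c \<le> (\<Sum>p\<in>P. \<bar>d p\<bar> * m p)\<^sup>2 / c"
proof -
  have "\<bar>\<Sum>p\<in>P. d p * m p\<bar> \<le> (\<Sum>p\<in>P. \<bar>d p\<bar> * m p)"
    using sum_abs[of "\<lambda>p. d p * m p" P] assms(1) by (simp add: abs_mult)
  then show ?thesis using assms(2) by (intro divide_right_mono power_mono) auto
qed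

theorem lemma5p1:
  fixes N N1 :: "real \<Rightarrow> real" and \<theta> :: real
  assumes "distribution_function N" "compactly_supported_df N" "finitely_valued_df N"
    and "distribution_function N1" "compactly_supported_df N1" "finitely_valued_df N1"
    and "0 < \<theta>" "\<theta> < 1"
  shows "let DN = (\<lambda>t. N1 t - N t);
             Nth = (\<lambda>\<tau> t. N t + \<tau> * DN t);
             F = (\<lambda>\<tau>. ustar (Nth \<tau>));
             u\<theta> = integral {0..} (Nth \<theta>);
             Du = integral {0..} DN;
             uD = integral {0..} (\<lambda>t. \<bar>DN t\<bar>)
         in (\<forall>x\<in>{0<..<1}. F differentiable (at x)) \<and>
            deriv F differentiable (at \<theta>) \<and>
            - deriv (deriv F) \<theta> \<ge> uD\<^sup>2 / u\<theta> \<and>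
            uD\<^sup>2 / u\<theta> \<ge> \<bar>Du\<bar>\<^sup>2 / u\<theta>"
proof -
  let ?P = "joint_values N N1" and ?m = "\<lambda>p. measure lebesgue (joint_level_set N N1 p)"
  let ?n = "\<lambda>x p. fst p + x * (snd p - fst p)" and ?d = "\<lambda>p. snd p - fst p"
  note sum_form = integral_joint_values_sum[OF assms(1-6)]
  have fin: "finite ?P" using finite_joint_values assms(3,6) .
  have pos: "?n x p > 0" if "p \<in> ?P" "x \<in> {0<..<1}" for x p
    using joint_values_combination_pos assms(1,4) that by auto
  have F: "(\<lambda>\<tau>. ustar (\<lambda>t. N t + \<tau> * (N1 t - N t))) = (\<lambda>\<tau>. \<Sum>p\<in>?P. psi0 (?n \<tau> p) * ?m p)"
    unfolding ustar_def using sum_form[of "\<lambda>a b. psi0 (a + _ * (b - a))"] by (simp add: psi0_def)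
  have dF: "(\<lambda>\<tau>. \<Sum>p\<in>?P. psi0 (?n \<tau> p) * ?m p) differentiable (at x)" if "x \<in> {0<..<1}" for x
    using psi0_affine_sum_has_real_derivative[OF fin, of fst x ?d ?m] pos[OF _ that]
    by (auto simp: real_differentiable_def)
  have ddF: "(deriv (\<lambda>\<tau>. \<Sum>p\<in>?P. psi0 (?n \<tau> p) * ?m p) has_real_derivative
               - (\<Sum>p\<in>?P. (?d p)\<^sup>2 / ?n \<theta> p * ?m p)) (at \<theta>)"
    using psi0_affine_sum_second_derivative[OF fin open_greaterThanLessThan] pos assms(7,8) by auto
  have CS: "(\<Sum>p\<in>?P. \<bar>?d p\<bar> * ?m p)\<^sup>2 / (\<Sum>p\<in>?P. ?n \<theta> p * ?m p)
              \<le> (\<Sum>p\<in>?P. (?d p)\<^sup>2 / ?n \<theta> p * ?m p)"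
    using weighted_cauchy_schwarz[OF fin] pos assms(7,8) by auto
  have "0 \<le> (\<Sum>p\<in>?P. ?n \<theta> p * ?m p)"
    using pos assms(7,8) by (intro sum_nonneg) (simp add: less_imp_le)
  then have abs_le: "\<bar>\<Sum>p\<in>?P. ?d p * ?m p\<bar>\<^sup>2 / (\<Sum>p\<in>?P. ?n \<theta> p * ?m p)
              \<le> (\<Sum>p\<in>?P. \<bar>?d p\<bar> * ?m p)\<^sup>2 / (\<Sum>p\<in>?P. ?n \<theta> p * ?m p)"
    using power2_abs_sum_div_le[where m = ?m and d = ?d and P = ?P] by simp
  have "integral {0..} (\<lambda>t. N t + \<theta> * (N1 t - N t)) = (\<Sum>p\<in>?P. ?n \<theta> p * ?m p)"
    "integral {0..} (\<lambda>t. N1 t - N t) = (\<Sum>p\<in>?P. ?d p * ?m p)"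
    "integral {0..} (\<lambda>t. \<bar>N1 t - N t\<bar>) = (\<Sum>p\<in>?P. \<bar>?d p\<bar> * ?m p)"
    using sum_form[of "\<lambda>a b. a + \<theta> * (b - a)"] sum_form[of "\<lambda>a b. b - a"]
      sum_form[of "\<lambda>a b. \<bar>b - a\<bar>"] by simp_all
  then show ?thesis
    unfolding Let_def F DERIV_imp_deriv[OF ddF]
    using dF ddF CS abs_le real_differentiable_def by auto
qed

end
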